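(* Fix a cell $c$ and let ${\cal L}_c:\mathbb{R}\times\mathbb{R}^{n_c}\to\mathbb{R}^{n_c}$ be a linear map (the constitutive relation ${\bf u}_c={\cal L}_c(p_c,{\bm\lambda}_c)$ of a mixed-hybrid scheme). Assume ${\cal L}_c$ is linearity preserving: for every affine function $q({\bf x})=a+{\bf g}\cdot{\bf x}$ ($a\in\mathbb{R}$, ${\bf g}\in\mathbb{R}^d$), $$ {\cal L}_c\big(q({\bf x}_c),(q({\bf x}_f))_{f\in\partial c}\big)=\big(-{\bf n}_f\cdot{\mathbb K}_c{\bf g}\big)_{f\in\partial c}. $$ Then: (i) there exists an $n_c\times n_c$ matrix ${\mathsf W}_{{\cal F},c}$ such that ${\cal L}_c(p_c,{\bm\lambda}_c)={\mathsf W}_{{\cal F},c}{\mathsf F}_c\Sigma_c(p_c\mathbb{1}-{\bm\lambda}_c)$ for all $(p_c,{\bm\lambda}_c)$, and ${\mathsf W}_{{\cal F},c}{\mathsf R}_c={\mathsf N}_c$ (i.e. the scheme belongs to the extended mixed-hybrid family); (ii) if moreover the bilinear form ${\cal B}((\tilde p_c,\tilde{\bm\lambda}_c),(p_c,{\bm\lambda}_c)):=(\tilde p_c\mathbb{1}-\tilde{\bm\lambda}_c)^T\Sigma_c{\mathsf F}_c\,{\cal L}_c(p_c,{\bm\lambda}_c)$ is symmetric and satisfies ${\cal B}((p_c,{\bm\lambda}_c),(p_c,{\bm\lambda}_c))>0$ whenever $p_c\mathbb{1}\neq{\bm\lambda}_c$, then ${\mathsf W}_{{\cal F},c}$ is symmetric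 positive definite and ${\mathsf M}_{{\cal F},c}:={\mathsf W}_{{\cal F},c}^{-1}$ is symmetric positive definite with ${\mathsf M}_{{\cal F},c}{\mathsf N}_c={\mathsf R}_c$ (a member of the mimetic family); and if in addition there are constants $0<C_1\le C_2$ with $C_1|c|\,\|{\bf u}\|^2\le{\cal B}((p_c,{\bm\lambda}_c),(p_c,{\bm\lambda}_c))\le C_2|c|\,\|{\bf u}\|^2$ for all $(p_c,{\bm\lambda}_c)$, where ${\bf u}={\cal L}_c(p_c,{\bm\lambda}_c)$ and $\|\cdot\|$ is the Euclidean norm, then $C_1|c|\,\|{\bf v}\|^2\le{\bf v}^T{\mathsf M}_{{\cal F},c}{\bf v}\le C_2|c|\,\|{\bf v}\|^2$ for all ${\bf v}\in\mathbb{R}^{n_c}$.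
   Context: $c\subset\mathbb{R}^d$ ($d=2,3$) is a polygonal/polyhedral cell with $n_c$ flat faces $f$, centroid ${\bf x}_c$, face centroids ${\bf x}_f$, face measures $|f|$, cell measure $|c|$. Each face has a fixed unit normal ${\bf n}_f$; ${\bf n}_{c,f}$ is the exterior unit normal and $\sigma_{c,f}={\bf n}_f\cdot{\bf n}_{c,f}\in\{\pm1\}$. ${\mathbb K}_c$ is a constant symmetric positive definite $d\times d$ tensor. ${\mathsf F}_c=\mathrm{diag}(|f|)_{f\in\partial c}$, $\Sigma_c=\mathrm{diag}(\sigma_{c,f})_{f\in\partial c}$, $\mathbb{1}=(1,\dots,1)^T\in\mathbb{R}^{n_c}$. ${\mathsf N}_c$ and ${\mathsf R}_c$ are the $n_c\times d$ matrices with entries $({\mathsf N}_c)_{f,i}={\bf n}_f\cdot{\mathbb K}_c{\bf e}_i$ and $({\mathsf R}_c)_{f,i}=\sigma_{c,f}|f|\,(x_{f,i}-x_{c,i})$, where ${\bf e}_i$ is the $i$-th coordinate vector and $x_{f,i},x_{c,i}$ are the $i$-th coordinates of ${\bf x}_f,{\bf x}_c$. *)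

theory Defs
  imports "HOL-Analysis.Analysis"
begin

definition diag_mat :: "('n::finite \<Rightarrow> real) \<Rightarrow> real^'n^'n" where
  "diag_mat a = (\<chi> i j. if i = j then a i else 0)"

definition spd :: "real^'n::finite^'n \<Rightarrow> bool" where
  "spd A \<longleftrightarrow> transpose A = A \<and> (\<forall>v. v \<noteq> 0 \<longrightarrow> v \<bullet> (A *v v) > 0)"

definition Nmat :: "('f::finite \<Rightarrow> real^'d::finite) \<Rightarrow> real^'d^'d \<Rightarrow> real^'d^'f" where
  "Nmat n K = (\<chi> f i. n f \<bullet> (K *v axis i 1))"

definition Rmat :: "('f::finite \<Rightarrow> real) \<Rightarrow> ('f \<Rightarrow> real) \<Rightarrow> ('f \<Rightarrow> real^'d::finite)
                    \<Rightarrow> real^'d \<Rightarrow> real^'d^'f" where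
  "Rmat \<sigma> fm xf xc = (\<chi> f i. \<sigma> f * fm f * (xf f $ i - xc $ i))"

definition Bform :: "('f::finite \<Rightarrow> real) \<Rightarrow> ('f \<Rightarrow> real) \<Rightarrow> (real \<times> (real^'f) \<Rightarrow> real^'f)
                     \<Rightarrow> real \<times> (real^'f) \<Rightarrow> real \<times> (real^'f) \<Rightarrow> real" where
  "Bform \<sigma> fm L y x = ((vec (fst y) - snd y) v* (diag_mat \<sigma> ** diag_mat fm)) \<bullet> L x"

end

theory Submission
  imports Defs
begin

text \<open>
  Linearity preservation for constant functions says \<open>L(p, p\<one>) = 0\<close>, so the linear map \<open>L\<close>
  depends only on the jump \<open>p\<one> - \<lambda>\<close>; as \<open>F\<^sub>c\<Sigma>\<^sub>c\<close> is invertible, it factors as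
  \<open>L(p,\<lambda>) = W F\<^sub>c\<Sigma>\<^sub>c(p\<one> - \<lambda>)\<close>. For the linear function \<open>q(x) = -g\<cdot>x\<close> the weighted jump is
  exactly \<open>R\<^sub>c g\<close>, so linearity preservation becomes \<open>W R\<^sub>c = N\<^sub>c\<close>.
  In the variable \<open>z = F\<^sub>c\<Sigma>\<^sub>c(p\<one> - \<lambda>)\<close>, which ranges over all vectors, \<open>B\<close> is the form
  \<open>z'\<^sup>T W z\<close>; hence symmetry and positivity of \<open>B\<close> are those of \<open>W\<close>. Finally every \<open>v\<close> is a
  flux, \<open>v = L(p,\<lambda>)\<close> for \<open>z = W\<^sup>-\<^sup>1v\<close>, with energy \<open>B = z\<^sup>T v = v\<^sup>T M v\<close>, which transfers the
  energy bounds to \<open>M = W\<^sup>-\<^sup>1\<close>.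
\<close>

lemma matrix_inv_right: "invertible A \<Longrightarrow> A ** matrix_inv A = mat 1"
  and matrix_inv_left: "invertible A \<Longrightarrow> matrix_inv A ** A = mat 1"
  unfolding invertible_def matrix_inv_def by (metis (mono_tags, lifting) someI_ex)+

lemma matrix_entry_inner_axis: "A $ i $ j = axis i 1 \<bullet> ((A :: real^'n^'m) *v axis j 1)"
  by (simp add: matrix_vector_mult_basis inner_axis' column_def)

lemma transpose_eq_if_inner_symmetric:
  fixes A :: "real^'n^'n"
  assumes "\<And>x y. x \<bullet> (A *v y) = y \<bullet> (A *v x)"
  shows "transpose A = A"
  using assms by (simp add: vec_eq_iff transpose_def matrix_entry_inner_axis)

lemma invertible_if_spd:
  assumes "spd A"
  shows "invertible A"
proof -
  have "x = 0" if "A *v x = 0" for x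
    using assms that by (auto simp: spd_def)
  then show ?thesis
    by (simp add: invertible_left_inverse matrix_left_invertible_ker)
qed

lemma spd_matrix_inv:
  assumes A: "spd A"
  shows "spd (matrix_inv A)"
proof -
  let ?M = "matrix_inv A"
  have AM: "A ** ?M = mat 1" and MA: "?M ** A = mat 1"
    using invertible_if_spd[OF A] by (simp_all add: matrix_inv_right matrix_inv_left)
  have "transpose ?M = transpose ?M ** (A ** ?M)"
    by (simp add: AM matrix_mul_rid)
  also have "\<dots> = transpose (A ** ?M) ** ?M"
    using A by (simp add: spd_def matrix_mul_assoc matrix_transpose_mul)
  also have "\<dots> = ?M"
    by (simp add: AM matrix_mul_lid)
  finally have sym: "transpose ?M = ?M" .
  have "v \<bullet> (?M *v v) > 0" if "v \<noteq> 0" for v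
  proof -
    have AMv: "A *v (?M *v v) = v"
      by (simp add: matrix_vector_mul_assoc AM)
    then have "?M *v v \<noteq> 0"
      using that by auto
    then have "(?M *v v) \<bullet> (A *v (?M *v v)) > 0"
      using A by (simp add: spd_def)
    then show ?thesis
      by (simp add: AMv inner_commute)
  qed
  with sym show ?thesis
    by (simp add: spd_def)
qed

lemma if_zero_mult: "(if P then a else 0) * b = (if P then a * b else (0 :: 'a::mult_zero))"
  by simp

lemma diag_mat_mult_vector: "diag_mat a *v v = (\<chi> i. a i * v $ i)"
  by (simp add: diag_mat_def matrix_vector_mult_def vec_eq_iff if_zero_mult)

lemma diag_mat_mult_diag_mat: "diag_mat a ** diag_mat b = diag_mat (\<lambda>i. a i * b i)"
  by (auto simp add: diag_mat_def matrix_matrix_mult_def vec_eq_iff if_zero_mult)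

lemma vector_matrix_mult_diag_mat: "v v* diag_mat a = diag_mat a *v v"
proof -
  have "transpose (diag_mat a) = diag_mat a"
    by (simp add: diag_mat_def transpose_def vec_eq_iff)
  then show ?thesis
    by (metis vector_transpose_matrix)
qed

lemma invertible_diag_mat:
  assumes "\<And>i. a i \<noteq> 0"
  shows "invertible (diag_mat a)"
proof -
  have "diag_mat (\<lambda>_. 1) = mat 1"
    by (simp add: diag_mat_def mat_def)
  then show ?thesis
    unfolding invertible_def using assms
    by (intro exI[of _ "diag_mat (\<lambda>i. inverse (a i))"]) (simp add: diag_mat_mult_diag_mat)
qed

lemma Nmat_mult_vector: "Nmat n K *v g = (\<chi> f. n f \<bullet> (K *v g))"
proof -
  have rows: "Nmat n K $ f = n f v* K" for f
    by (simp add: Nmat_def vec_eq_iff flip: dot_lmul_matrix) (simp add: inner_axis)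
  show ?thesis
    by (simp add: vec_eq_iff[of "Nmat n K *v g"] matrix_vector_mul_component rows dot_lmul_matrix)
qed

definition weighted_jump :: "('f::finite \<Rightarrow> real) \<Rightarrow> ('f \<Rightarrow> real) \<Rightarrow> real \<times> (real^'f) \<Rightarrow> real^'f"
  where "weighted_jump \<sigma> fm x = (diag_mat fm ** diag_mat \<sigma>) *v (vec (fst x) - snd x)"

lemma Bform_eq_inner_weighted_jump: "Bform \<sigma> fm L y x = weighted_jump \<sigma> fm y \<bullet> L x"
  by (simp add: Bform_def weighted_jump_def vector_matrix_mult_diag_mat diag_mat_mult_diag_mat mult.commute)

lemma Rmat_mult_vector:
  "Rmat \<sigma> fm xf xc *v g = weighted_jump \<sigma> fm (- (g \<bullet> xc), \<chi> f. - (g \<bullet> xf f))"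
proof -
  have "(Rmat \<sigma> fm xf xc *v g) $ f = \<sigma> f * fm f * ((xf f - xc) \<bullet> g)" for f
    by (simp add: Rmat_def matrix_vector_mult_def inner_vec_def sum_distrib_left mult.assoc)
  moreover have "weighted_jump \<sigma> fm (- (g \<bullet> xc), \<chi> f. - (g \<bullet> xf f)) $ f
      = \<sigma> f * fm f * ((xf f - xc) \<bullet> g)" for f
    by (simp add: weighted_jump_def diag_mat_mult_diag_mat diag_mat_mult_vector
        inner_diff_left inner_commute[of g] algebra_simps)
  ultimately show ?thesis
    by (simp add: vec_eq_iff)
qed

lemma weighted_jump_surj:
  assumes "\<And>f. \<sigma> f \<noteq> 0" "\<And>f. fm f \<noteq> 0"
  shows "\<exists>l. weighted_jump \<sigma> fm (0, l) = z"
proof -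
  let ?D = "diag_mat fm ** diag_mat \<sigma>"
  have "invertible ?D"
    using assms by (simp add: diag_mat_mult_diag_mat invertible_diag_mat)
  then have "weighted_jump \<sigma> fm (0, - (matrix_inv ?D *v z)) = z"
    by (simp add: weighted_jump_def matrix_vector_mul_assoc matrix_inv_right)
  then show ?thesis ..
qed

lemma linear_Pair_zero: "linear (\<lambda>z. (0 :: 'a::real_vector, z :: 'b::real_vector))"
  by (rule linearI) simp_all

lemma linear_factors_through_weighted_jump:
  fixes L :: "real \<times> (real^'f::finite) \<Rightarrow> real^'f"
  assumes L: "linear L" and const: "\<And>p. L (p, vec p) = 0"
    and nz: "\<And>f. \<sigma> f \<noteq> 0" "\<And>f. fm f \<noteq> 0"
  shows "\<exists>W. \<forall>p l. L (p, l) = W *v weighted_jump \<sigma> fm (p, l)"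
proof -
  let ?D = "diag_mat fm ** diag_mat \<sigma>"
  let ?g = "\<lambda>z. - L (0, matrix_inv ?D *v z)"
  have "linear (\<lambda>z. L (0, matrix_inv ?D *v z))"
    using linear_compose[OF linear_compose[OF matrix_vector_mul_linear linear_Pair_zero] L]
    by (simp add: o_def)
  then have "linear ?g"
    by (rule linear_compose_neg)
  then have W: "matrix ?g *v z = ?g z" for z
    by (metis matrix_vector_mul(2))
  have "invertible ?D"
    using nz by (simp add: diag_mat_mult_diag_mat invertible_diag_mat)
  then have jump: "matrix_inv ?D *v weighted_jump \<sigma> fm (p, l) = vec p - l" for p l
    by (simp add: weighted_jump_def matrix_vector_mul_assoc matrix_inv_left)
  have split: "L (p, l) = - L (0, vec p - l)" for p l
    using linear_diff[OF L, of "(p, vec p)" "(0, vec p - l)"] by (simp add: const)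
  have "L (p, l) = matrix ?g *v weighted_jump \<sigma> fm (p, l)" for p l
    unfolding W jump by (rule split)
  then show ?thesis by blast
qed

lemma factorization_consistent:
  fixes L :: "real \<times> (real^'f::finite) \<Rightarrow> real^'f" and W :: "real^'f^'f"
  assumes fact: "\<And>p l. L (p, l) = W *v weighted_jump \<sigma> fm (p, l)"
    and lin_pres: "\<And>g. L (g \<bullet> xc, \<chi> f. g \<bullet> xf f) = (\<chi> f. - (n f \<bullet> (K *v g)))"
  shows "W ** Rmat \<sigma> fm xf xc = Nmat n K"
proof (subst matrix_eq, intro allI)
  fix g
  have "(W ** Rmat \<sigma> fm xf xc) *v g = L ((- g) \<bullet> xc, \<chi> f. (- g) \<bullet> xf f)"
    by (simp add: fact Rmat_mult_vector flip: matrix_vector_mul_assoc)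
  also have "\<dots> = (\<chi> f. - (n f \<bullet> (K *v - g)))"
    by (rule lin_pres)
  also have "\<dots> = Nmat n K *v g"
    using matrix_vector_mult_diff_distrib[of K 0 g] by (simp add: Nmat_mult_vector)
  finally show "(W ** Rmat \<sigma> fm xf xc) *v g = Nmat n K *v g" .
qed

lemma Bform_eq_inner_matrix:
  fixes L :: "real \<times> (real^'f::finite) \<Rightarrow> real^'f" and W :: "real^'f^'f"
  assumes "\<And>p l. L (p, l) = W *v weighted_jump \<sigma> fm (p, l)"
  shows "Bform \<sigma> fm L y (p, l) = weighted_jump \<sigma> fm y \<bullet> (W *v weighted_jump \<sigma> fm (p, l))"
  by (simp add: Bform_eq_inner_weighted_jump assms)

lemma spd_if_Bform_symmetric_positive:
  fixes L :: "real \<times> (real^'f::finite) \<Rightarrow> real^'f" and W :: "real^'f^'f"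
  assumes fact: "\<And>p l. L (p, l) = W *v weighted_jump \<sigma> fm (p, l)"
    and nz: "\<And>f. \<sigma> f \<noteq> 0" "\<And>f. fm f \<noteq> 0"
    and sym: "\<And>y x. Bform \<sigma> fm L y x = Bform \<sigma> fm L x y"
    and pos: "\<And>p l. vec p \<noteq> l \<Longrightarrow> Bform \<sigma> fm L (p, l) (p, l) > 0"
  shows "spd W"
proof -
  note B = Bform_eq_inner_matrix[OF fact]
  have "x \<bullet> (W *v y) = y \<bullet> (W *v x)" for x y
  proof -
    obtain lx where "weighted_jump \<sigma> fm (0, lx) = x"
      using weighted_jump_surj[of \<sigma> fm, OF nz] by blast
    moreover obtain ly where "weighted_jump \<sigma> fm (0, ly) = y"
      using weighted_jump_surj[of \<sigma> fm, OF nz] by blast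
    ultimately show ?thesis
      using sym[of "(0, lx)" "(0, ly)"] by (simp add: B)
  qed
  moreover have "z \<bullet> (W *v z) > 0" if "z \<noteq> 0" for z
  proof -
    obtain l where l: "weighted_jump \<sigma> fm (0, l) = z"
      using weighted_jump_surj[of \<sigma> fm, OF nz] by blast
    with \<open>z \<noteq> 0\<close> have "vec 0 \<noteq> l"
      by (auto simp: weighted_jump_def)
    then show ?thesis
      using pos[of 0 l] by (simp add: B l)
  qed
  ultimately show ?thesis
    by (simp add: spd_def transpose_eq_if_inner_symmetric)
qed

lemma flux_with_energy_matrix_inv:
  fixes L :: "real \<times> (real^'f::finite) \<Rightarrow> real^'f" and W :: "real^'f^'f"
  assumes fact: "\<And>p l. L (p, l) = W *v weighted_jump \<sigma> fm (p, l)" and "invertible W"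
    and nz: "\<And>f. \<sigma> f \<noteq> 0" "\<And>f. fm f \<noteq> 0"
  shows "\<exists>p l. L (p, l) = v \<and> Bform \<sigma> fm L (p, l) (p, l) = v \<bullet> (matrix_inv W *v v)"
proof -
  obtain l where l: "weighted_jump \<sigma> fm (0, l) = matrix_inv W *v v"
    using weighted_jump_surj[of \<sigma> fm, OF nz] by blast
  have "L (0, l) = v"
    using \<open>invertible W\<close> by (simp add: fact l matrix_vector_mul_assoc matrix_inv_right)
  moreover have "Bform \<sigma> fm L (0, l) (0, l) = v \<bullet> (matrix_inv W *v v)"
    using calculation by (simp add: Bform_eq_inner_weighted_jump l inner_commute)
  ultimately show ?thesis by blast
qed

theorem mainTheorem2:
  fixes L :: "real \<times> (real^'f::finite) \<Rightarrow> real^'f"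
    and xc :: "real^'d::finite" and xf :: "'f \<Rightarrow> real^'d"
    and n ncf :: "'f \<Rightarrow> real^'d" and \<sigma> fm :: "'f \<Rightarrow> real"
    and cm :: real and K :: "real^'d^'d"
  assumes dim: "CARD('d) = 2 \<or> CARD('d) = 3"
    and unit_n: "\<And>f. norm (n f) = 1"
    and unit_ncf: "\<And>f. norm (ncf f) = 1"
    and sigma_def: "\<And>f. \<sigma> f = n f \<bullet> ncf f"
    and sigma_pm: "\<And>f. \<sigma> f = 1 \<or> \<sigma> f = -1"
    and fm_pos: "\<And>f. fm f > 0"
    and cm_pos: "cm > 0"
    and K_spd: "spd K"
    and lin: "linear L"
    and lin_pres: "\<And>a g. L (a + g \<bullet> xc, \<chi> f. a + g \<bullet> xf f) = (\<chi> f. - (n f \<bullet> (K *v g)))"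
  shows "\<exists>W :: real^'f^'f.
           (\<forall>p l. L (p, l) = W *v ((diag_mat fm ** diag_mat \<sigma>) *v (vec p - l)))
         \<and> W ** Rmat \<sigma> fm xf xc = Nmat n K
         \<and> ((\<forall>y x. Bform \<sigma> fm L y x = Bform \<sigma> fm L x y)
             \<and> (\<forall>p l. vec p \<noteq> l \<longrightarrow> Bform \<sigma> fm L (p, l) (p, l) > 0)
            \<longrightarrow> spd W \<and> spd (matrix_inv W)
                \<and> matrix_inv W ** Nmat n K = Rmat \<sigma> fm xf xc
                \<and> (\<forall>C1 C2. 0 < C1 \<and> C1 \<le> C2
                     \<and> (\<forall>p l. C1 * cm * (norm (L (p, l)))\<^sup>2 \<le> Bform \<sigma> fm L (p, l) (p, l)
                             \<and> Bform \<sigma> fm L (p, l) (p, l) \<le> C2 * cm * (norm (L (p, l)))\<^sup>2)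
                   \<longrightarrow> (\<forall>v. C1 * cm * (norm v)\<^sup>2 \<le> v \<bullet> (matrix_inv W *v v)
                            \<and> v \<bullet> (matrix_inv W *v v) \<le> C2 * cm * (norm v)\<^sup>2)))"
proof -
  have nz: "\<sigma> f \<noteq> 0" "fm f \<noteq> 0" for f
    using sigma_pm[of f] fm_pos[of f] by auto
  have "(\<chi> f. p) = (vec p :: real^'f)" "(\<chi> f. (0 :: real)) = (0 :: real^'f)" for p
    by (simp_all add: vec_eq_iff)
  then have "L (p, vec p) = 0" for p
    using lin_pres[of p 0] by simp
  then obtain W where fact: "\<And>p l. L (p, l) = W *v weighted_jump \<sigma> fm (p, l)"
    using linear_factors_through_weighted_jump[of L \<sigma> fm, OF lin _ nz] by blast
  have WR: "W ** Rmat \<sigma> fm xf xc = Nmat n K"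
    using lin_pres[of 0] by (intro factorization_consistent[OF fact]) simp
  show ?thesis
  proof (intro exI[of _ W] conjI impI allI)
    show "L (p, l) = W *v ((diag_mat fm ** diag_mat \<sigma>) *v (vec p - l))" for p l
      by (simp add: fact weighted_jump_def)
    show "W ** Rmat \<sigma> fm xf xc = Nmat n K"
      by (rule WR)
    assume "(\<forall>y x. Bform \<sigma> fm L y x = Bform \<sigma> fm L x y)
      \<and> (\<forall>p l. vec p \<noteq> l \<longrightarrow> Bform \<sigma> fm L (p, l) (p, l) > 0)"
    then have W: "spd W"
      using spd_if_Bform_symmetric_positive[of L W \<sigma> fm, OF fact nz] by blast
    then show "spd W" "spd (matrix_inv W)"
      by (simp_all add: spd_matrix_inv)
    show "matrix_inv W ** Nmat n K = Rmat \<sigma> fm xf xc"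
      using W by (simp add: invertible_if_spd matrix_inv_left matrix_mul_assoc flip: WR)
    fix C1 C2 v
    assume bounds: "0 < C1 \<and> C1 \<le> C2
      \<and> (\<forall>p l. C1 * cm * (norm (L (p, l)))\<^sup>2 \<le> Bform \<sigma> fm L (p, l) (p, l)
              \<and> Bform \<sigma> fm L (p, l) (p, l) \<le> C2 * cm * (norm (L (p, l)))\<^sup>2)"
    obtain p l where flux: "L (p, l) = v" "Bform \<sigma> fm L (p, l) (p, l) = v \<bullet> (matrix_inv W *v v)"
      using flux_with_energy_matrix_inv[of L W \<sigma> fm, OF fact invertible_if_spd[OF W] nz] by blast
    have "C1 * cm * (norm (L (p, l)))\<^sup>2 \<le> Bform \<sigma> fm L (p, l) (p, l)"
      and "Bform \<sigma> fm L (p, l) (p, l) \<le> C2 * cm * (norm (L (p, l)))\<^sup>2"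
      using bounds by blast+
    then show "C1 * cm * (norm v)\<^sup>2 \<le> v \<bullet> (matrix_inv W *v v)"
      and "v \<bullet> (matrix_inv W *v v) \<le> C2 * cm * (norm v)\<^sup>2"
      by (simp_all only: flux)
  qed
qed

end
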